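(* Let $q$ be a prime power, $m\ge2$, $1\le k<n$, and let $X\in \mathbb{F}_{q^m}^{k\times(n-k)}$ be chosen uniformly at random. Then $$\Pr\big(\mathrm{rs} [\,I_k \mid X\,] \text{ is a generalized Gabidulin code}\big) \leq \phi(m)\,( 2q^{1-m})^{\lfloor\frac{k}{2}\rfloor \lfloor\frac{n-k}{2}\rfloor},$$ where $\phi$ is Euler's totient function.
   Context: $\mathrm{rs}$ denotes $\mathbb{F}_{q^m}$-row space. For $s$ coprime to $m$ and $g_1,\dots,g_n\in\mathbb{F}_{q^m}$ linearly independent over $\mathbb{F}_q$, the generalized Gabidulin code of dimension $k$ with parameter $s$ is the row space of the $k\times n$ matrix with $(i,j)$ entry $g_j^{q^{s(i-1)}}$; a generalized Gabidulin code is such a code for some such $s$ and $g_1,\dots,g_n$. *)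

theory Defs
  imports Complex_Main "HOL-Number_Theory.Number_Theory"
begin

definition prime_power :: "nat \<Rightarrow> bool" where
  "prime_power q \<longleftrightarrow> (\<exists>p r. prime p \<and> r > 0 \<and> q = p ^ r)"

text \<open>Vectors of length n over F are functions nat => F that vanish outside {..<n};
  a k x n matrix is a function nat => nat => F (entries outside the range are ignored).\<close>
definition row_space :: "nat \<Rightarrow> nat \<Rightarrow> (nat \<Rightarrow> nat \<Rightarrow> 'a::field) \<Rightarrow> (nat \<Rightarrow> 'a) set" where
  "row_space k n M = {v. \<exists>a :: nat \<Rightarrow> 'a. v = (\<lambda>j. if j < n then (\<Sum>i<k. a i * M i j) else 0)}"

text \<open>The subfield F_q of F_{q^m} is {x. x^q = x}.  Linear independence over F_q.\<close>
definition lin_indep_Fq :: "nat \<Rightarrow> nat \<Rightarrow> (nat \<Rightarrow> 'a::field) \<Rightarrow> bool" where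
  "lin_indep_Fq q n g \<longleftrightarrow>
     (\<forall>c :: nat \<Rightarrow> 'a. (\<forall>j<n. c j ^ q = c j) \<longrightarrow> (\<Sum>j<n. c j * g j) = 0 \<longrightarrow> (\<forall>j<n. c j = 0))"

definition gab_matrix :: "nat \<Rightarrow> nat \<Rightarrow> (nat \<Rightarrow> 'a::field) \<Rightarrow> nat \<Rightarrow> nat \<Rightarrow> 'a" where
  "gab_matrix q s g i j = g j ^ (q ^ (s * i))"

definition generalized_gabidulin :: "nat \<Rightarrow> nat \<Rightarrow> nat \<Rightarrow> nat \<Rightarrow> (nat \<Rightarrow> 'a::field) set \<Rightarrow> bool" where
  "generalized_gabidulin q m k n C \<longleftrightarrow>
     (\<exists>s g. coprime s m \<and> lin_indep_Fq q n g \<and> C = row_space k n (gab_matrix q s g))"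

definition sys_matrix :: "nat \<Rightarrow> (nat \<Rightarrow> nat \<Rightarrow> 'a::field) \<Rightarrow> nat \<Rightarrow> nat \<Rightarrow> 'a" where
  "sys_matrix k X i j = (if j < k then (if i = j then 1 else 0) else X i (j - k))"

definition matrices :: "nat \<Rightarrow> nat \<Rightarrow> (nat \<Rightarrow> nat \<Rightarrow> 'a::zero) set" where
  "matrices r c = {X. \<forall>i j. (r \<le> i \<or> c \<le> j) \<longrightarrow> X i j = 0}"

end

(*
  Every generalized Gabidulin code of length n is already obtained with s < m: since
  x ^ (q ^ m) = x on a field with q ^ m elements, the generator matrix depends only on
  s mod m.  Dividing all g_j by g_0 \<noteq> 0 only rescales the rows, so we may also take g_0 = 1.
  Hence there are at most totient m * (q ^ m) ^ (n - 1) such codes.  On the other hand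
  X \<mapsto> rs [I_k | X] is injective, because the first k coordinates of a codeword are its
  coefficients with respect to the rows of [I_k | X].  The probability is therefore at most
  totient m * q ^ (- m * (k - 1) * (n - k - 1)), and (k div 2) * ((n - k) div 2) \<le>
  (k - 1) * (n - k - 1) gives the stated bound.
*)
theory Submission
  imports Defs "HOL-Library.FuncSet"
begin

lemma finite_field_power_card:
  fixes x :: "'a :: {field,finite}"
  shows "x ^ card (UNIV :: 'a set) = x"
proof (cases "x = 0")
  case False
  have "x ^ card (UNIV - {0 :: 'a}) * \<Prod>(UNIV - {0 :: 'a}) = (\<Prod>y\<in>UNIV-{0}. x * y)"
    by (simp add: prod.distrib)
  also have "\<dots> = \<Prod>(UNIV - {0})"
    by (rule prod.reindex_bij_witness[of _ "\<lambda>y. y / x" "\<lambda>y. x * y"]) (use False in auto)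
  finally have "x ^ (card (UNIV :: 'a set) - 1) = 1"
    by (simp add: card_Diff_singleton)
  moreover have "card (UNIV :: 'a set) = Suc (card (UNIV :: 'a set) - 1)"
    using finite_UNIV_card_ge_0[where 'a = 'a] by simp
  ultimately show ?thesis
    by (metis power_Suc mult.right_neutral)
qed (simp add: finite_UNIV_card_ge_0)

lemma finite_field_power_card_power:
  fixes x :: "'a :: {field,finite}"
  shows "x ^ (card (UNIV :: 'a set) ^ t) = x"
  by (induction t) (simp_all add: finite_field_power_card power_mult)

lemma card_coprime_less: "card {s. s < m \<and> coprime s m} = totient m"
proof (cases "m \<le> 1")
  case True
  then consider "m = 0" | "m = 1" by linarith
  then show ?thesis
  proof cases
    case 2
    then have "{s. s < m \<and> coprime s m} = {0}"
      by auto
    then show ?thesis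
      using 2 by simp
  qed simp
next
  case False
  then have "{s. s < m \<and> coprime s m} = totatives m"
    by (auto simp: totatives_def intro: totatives_less Nat.gr0I)
  then show ?thesis by (simp add: totient_def)
qed

lemma row_space_rescale_rows_subset:
  assumes "\<And>i j. i < k \<Longrightarrow> j < n \<Longrightarrow> M i j = d i * M' i j"
  shows "row_space k n M \<subseteq> row_space k n M'"
proof
  fix v assume "v \<in> row_space k n M"
  then obtain a where v: "v = (\<lambda>j. if j < n then (\<Sum>i<k. a i * M i j) else 0)"
    unfolding row_space_def by blast
  have "v = (\<lambda>j. if j < n then (\<Sum>i<k. (a i * d i) * M' i j) else 0)"
    unfolding v using assms by (auto intro!: sum.cong simp: mult.assoc)
  then show "v \<in> row_space k n M'"
    unfolding row_space_def by (intro CollectI exI[of _ "\<lambda>i. a i * d i"])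
qed

lemma row_space_rescale_rows:
  fixes M M' :: "nat \<Rightarrow> nat \<Rightarrow> 'a::field"
  assumes "\<And>i. i < k \<Longrightarrow> d i \<noteq> 0"
    and "\<And>i j. i < k \<Longrightarrow> j < n \<Longrightarrow> M i j = d i * M' i j"
  shows "row_space k n M = row_space k n M'"
proof
  show "row_space k n M \<subseteq> row_space k n M'"
    using assms(2) by (rule row_space_rescale_rows_subset)
  show "row_space k n M' \<subseteq> row_space k n M"
    by (rule row_space_rescale_rows_subset[where d = "\<lambda>i. inverse (d i)"]) (simp add: assms)
qed

lemma row_space_cong:
  assumes "\<And>i j. i < k \<Longrightarrow> j < n \<Longrightarrow> M i j = M' i j"
  shows "row_space k n M = row_space k n M'"
  by (rule row_space_rescale_rows[where d = "\<lambda>_. 1"]) (simp_all add: assms)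

lemma sys_matrix_row_in_row_space:
  assumes "i < k"
  shows "(\<lambda>j. if j < n then sys_matrix k X i j else 0) \<in> row_space k n (sys_matrix k X)"
proof -
  have "sys_matrix k X i j = (\<Sum>i'<k. (if i' = i then 1 else 0) * sys_matrix k X i' j)" for j
    using assms by (simp add: if_distrib[of "\<lambda>c. c * _"] cong: if_cong)
  then show ?thesis
    unfolding row_space_def by (intro CollectI exI[of _ "\<lambda>i'. if i' = i then 1 else 0"]) presburger
qed

lemma row_space_sys_matrix_coeffs:
  fixes Y :: "nat \<Rightarrow> nat \<Rightarrow> 'a::field"
  assumes "v \<in> row_space k n (sys_matrix k Y)" and "k \<le> n" and "j < n"
  shows "v j = (\<Sum>i<k. v i * sys_matrix k Y i j)"
proof -
  obtain a where v: "v = (\<lambda>j. if j < n then (\<Sum>i<k. a i * sys_matrix k Y i j) else 0)"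
    using assms(1) unfolding row_space_def by blast
  have "v i = a i" if "i < k" for i
    using that assms(2) by (simp add: v sys_matrix_def if_distrib[of "\<lambda>c. _ * c"] cong: if_cong)
  then show ?thesis
    using assms(3) by (simp add: v)
qed

lemma inj_on_row_space_sys_matrix:
  assumes "k \<le> n"
  shows "inj_on (\<lambda>X :: nat \<Rightarrow> nat \<Rightarrow> 'a::field. row_space k n (sys_matrix k X)) (matrices k (n - k))"
proof (rule inj_onI, intro ext)
  fix X Y :: "nat \<Rightarrow> nat \<Rightarrow> 'a" and i j
  assume X: "X \<in> matrices k (n - k)" and Y: "Y \<in> matrices k (n - k)"
    and eq: "row_space k n (sys_matrix k X) = row_space k n (sys_matrix k Y)"
  show "X i j = Y i j"
  proof (cases "i < k \<and> j < n - k")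
    case False
    then show ?thesis using X Y unfolding matrices_def by auto
  next
    case True
    define v where "v = (\<lambda>j. if j < n then sys_matrix k X i j else 0)"
    have "v \<in> row_space k n (sys_matrix k Y)"
      unfolding v_def eq[symmetric] using True by (intro sys_matrix_row_in_row_space) simp
    moreover have kj: "k + j < n"
      using True by linarith
    ultimately have "v (k + j) = (\<Sum>i'<k. v i' * sys_matrix k Y i' (k + j))"
      using assms row_space_sys_matrix_coeffs by blast
    then show ?thesis
      using True kj by (simp add: v_def sys_matrix_def if_distrib[of "\<lambda>c. c * _"] cong: if_cong)
  qed
qed

lemma card_matrices:
  "card (matrices r c :: (nat \<Rightarrow> nat \<Rightarrow> 'a::{zero,finite}) set) = card (UNIV :: 'a set) ^ (r * c)"
proof -
  have "bij_betw (\<lambda>X. \<lambda>i\<in>{..<r}. \<lambda>j\<in>{..<c}. X i j) (matrices r c :: (nat \<Rightarrow> nat \<Rightarrow> 'a) set)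
          ({..<r} \<rightarrow>\<^sub>E {..<c} \<rightarrow>\<^sub>E UNIV)"
    by (rule bij_betw_byWitness[where f' = "\<lambda>F i j. if i < r \<and> j < c then F i j else 0"])
      (auto simp: matrices_def fun_eq_iff PiE_def extensional_def Pi_iff)
  then show ?thesis
    by (simp add: bij_betw_same_card card_funcsetE power_mult mult.commute)
qed

lemma gab_matrix_mod:
  fixes g :: "nat \<Rightarrow> 'a::{field,finite}"
  assumes "card (UNIV :: 'a set) = q ^ m"
  shows "gab_matrix q s g = gab_matrix q (s mod m) g"
proof (intro ext)
  fix i j
  have "q ^ (s * i) = q ^ ((s mod m) * i) * (q ^ m) ^ ((s div m) * i)"
    by (metis add_mult_distrib mod_div_mult_eq mult.assoc mult.commute power_add power_mult)
  then have "g j ^ (q ^ (s * i)) = (g j ^ (q ^ ((s mod m) * i))) ^ (card (UNIV :: 'a set) ^ ((s div m) * i))"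
    by (simp add: power_mult assms)
  also have "\<dots> = g j ^ (q ^ ((s mod m) * i))"
    by (rule finite_field_power_card_power)
  finally show "gab_matrix q s g i j = gab_matrix q (s mod m) g i j"
    by (simp add: gab_matrix_def)
qed

lemma lin_indep_Fq_nonzero:
  fixes g :: "nat \<Rightarrow> 'a::field"
  assumes "lin_indep_Fq q n g" and "j < n" and "0 < q"
  shows "g j \<noteq> 0"
proof
  assume "g j = 0"
  define c where "c = (\<lambda>j'. if j' = j then 1 else (0::'a))"
  have "\<forall>j'<n. c j' ^ q = c j'"
    using assms(3) by (simp add: c_def)
  moreover have "(\<Sum>j'<n. c j' * g j') = 0"
    using \<open>g j = 0\<close> by (simp add: c_def if_distrib[of "\<lambda>c. c * _"] cong: if_cong)
  ultimately have "c j = 0"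
    using assms(1,2) unfolding lin_indep_Fq_def by blast
  then show False
    by (simp add: c_def)
qed

lemma row_space_gab_matrix_normalize:
  fixes g :: "nat \<Rightarrow> 'a::field"
  assumes "g 0 \<noteq> 0"
  shows "row_space k n (gab_matrix q s g) = row_space k n (gab_matrix q s (\<lambda>j. g j / g 0))"
  by (rule row_space_rescale_rows[where d = "\<lambda>i. g 0 ^ (q ^ (s * i))"])
    (use assms in \<open>simp_all add: gab_matrix_def power_divide\<close>)

lemma field_card_ge_2: "2 \<le> card (UNIV :: 'a::{field,finite} set)"
proof -
  have "card {0, 1 :: 'a} \<le> card (UNIV :: 'a set)"
    by (rule card_mono) simp_all
  then show ?thesis
    by simp
qed

lemma generalized_gabidulin_codes_subset:
  assumes card: "card (UNIV :: 'a::{field,finite} set) = q ^ m" and "0 < n"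
  shows "{C :: (nat \<Rightarrow> 'a) set. generalized_gabidulin q m k n C}
           \<subseteq> (\<lambda>(s, f). row_space k n (gab_matrix q s (f(0 := 1))))
               ` ({s. s < m \<and> coprime s m} \<times> ({1..<n} \<rightarrow>\<^sub>E UNIV))"
proof
  fix C :: "(nat \<Rightarrow> 'a) set"
  assume "C \<in> {C. generalized_gabidulin q m k n C}"
  then obtain s g where "coprime s m" and g: "lin_indep_Fq q n g"
    and C: "C = row_space k n (gab_matrix q s g)"
    unfolding generalized_gabidulin_def by blast
  have "2 \<le> q ^ m"
    using field_card_ge_2[where 'a = 'a] card by simp
  then have "0 < q" and "0 < m"
    by (auto simp: power_0_left intro!: Nat.gr0I split: if_splits)
  then have g0: "g 0 \<noteq> 0"
    using lin_indep_Fq_nonzero[OF g \<open>0 < n\<close>] by simp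
  define f where "f = restrict (\<lambda>j. g j / g 0) {1..<n}"
  have "C = row_space k n (gab_matrix q (s mod m) (\<lambda>j. g j / g 0))"
    using C gab_matrix_mod[OF card] row_space_gab_matrix_normalize[of g, OF g0] by metis
  also have "\<dots> = row_space k n (gab_matrix q (s mod m) (f(0 := 1)))"
    by (rule row_space_cong) (use g0 in \<open>auto simp: gab_matrix_def f_def\<close>)
  finally have "C = row_space k n (gab_matrix q (s mod m) (f(0 := 1)))" .
  moreover have "(s mod m, f) \<in> {s. s < m \<and> coprime s m} \<times> ({1..<n} \<rightarrow>\<^sub>E UNIV)"
    using \<open>0 < m\<close> \<open>coprime s m\<close> by (simp add: f_def)
  ultimately show "C \<in> (\<lambda>(s, f). row_space k n (gab_matrix q s (f(0 := 1))))
               ` ({s. s < m \<and> coprime s m} \<times> ({1..<n} \<rightarrow>\<^sub>E UNIV))"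
    by (auto intro!: image_eqI[where x = "(s mod m, f)"])
qed

lemma card_generalized_gabidulin_codes_le:
  assumes "card (UNIV :: 'a::{field,finite} set) = q ^ m" and "0 < n"
  shows "finite {C :: (nat \<Rightarrow> 'a) set. generalized_gabidulin q m k n C}"
    and "card {C :: (nat \<Rightarrow> 'a) set. generalized_gabidulin q m k n C}
           \<le> totient m * card (UNIV :: 'a set) ^ (n - 1)"
proof -
  let ?S = "{s. s < m \<and> coprime s m} \<times> ({1..<n} \<rightarrow>\<^sub>E (UNIV :: 'a set))"
  have fin: "finite ?S"
    by (simp add: finite_PiE)
  show "finite {C :: (nat \<Rightarrow> 'a) set. generalized_gabidulin q m k n C}"
    by (rule finite_subset[OF generalized_gabidulin_codes_subset[OF assms] finite_imageI[OF fin]])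
  have "card {C :: (nat \<Rightarrow> 'a) set. generalized_gabidulin q m k n C}
          \<le> card ((\<lambda>(s, f). row_space k n (gab_matrix q s (f(0 := 1)))) ` ?S)"
    by (rule card_mono[OF finite_imageI[OF fin] generalized_gabidulin_codes_subset[OF assms]])
  also have "\<dots> \<le> card ?S"
    by (rule card_image_le[OF fin])
  also have "\<dots> = totient m * card (UNIV :: 'a set) ^ (n - 1)"
    by (simp add: card_cartesian_product card_coprime_less card_funcsetE)
  finally show "card {C :: (nat \<Rightarrow> 'a) set. generalized_gabidulin q m k n C}
           \<le> totient m * card (UNIV :: 'a set) ^ (n - 1)" .
qed

lemma card_systematic_generalized_gabidulin_le:
  assumes "card (UNIV :: 'a::{field,finite} set) = q ^ m" and "k \<le> n" and "0 < n"
  shows "card {X \<in> matrices k (n - k) :: (nat \<Rightarrow> nat \<Rightarrow> 'a) set.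
                 generalized_gabidulin q m k n (row_space k n (sys_matrix k X))}
           \<le> totient m * card (UNIV :: 'a set) ^ (n - 1)"
proof -
  let ?R = "\<lambda>X :: nat \<Rightarrow> nat \<Rightarrow> 'a. row_space k n (sys_matrix k X)"
  let ?Good = "{X \<in> matrices k (n - k). generalized_gabidulin q m k n (?R X)}"
  have "card ?Good = card (?R ` ?Good)"
    by (rule card_image[symmetric], rule inj_on_subset[OF inj_on_row_space_sys_matrix[OF assms(2)]]) auto
  also have "\<dots> \<le> card {C :: (nat \<Rightarrow> 'a) set. generalized_gabidulin q m k n C}"
    by (rule card_mono[OF card_generalized_gabidulin_codes_le(1)[OF assms(1,3)]]) auto
  also have "\<dots> \<le> totient m * card (UNIV :: 'a set) ^ (n - 1)"
    by (rule card_generalized_gabidulin_codes_le(2)[OF assms(1,3)])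
  finally show ?thesis .
qed

lemma inverse_power_le_gabidulin_bound:
  assumes "1 \<le> q" and "1 \<le> m" and "e \<le> A"
  shows "inverse (real q ^ m) ^ A \<le> (2 * real q powr (1 - real m)) ^ e"
proof -
  have "inverse (real q ^ m) ^ A \<le> inverse (real q ^ m) ^ e"
  proof (rule power_decreasing)
    have "1 \<le> real q ^ m"
      using assms(1) by (simp add: one_le_power)
    then show "inverse (real q ^ m) \<le> 1"
      by (simp add: inverse_le_1_iff)
  qed (simp_all add: assms(3))
  also have "inverse (real q ^ m) \<le> 2 * real q powr (1 - real m)"
  proof -
    have "inverse (real q ^ m) = real q powr (- real m)"
      using assms(1) by (simp add: powr_minus powr_realpow)
    also have "\<dots> \<le> real q powr (1 - real m)"
      by (rule powr_mono) (use assms(1) in auto)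
    also have "\<dots> \<le> 2 * real q powr (1 - real m)"
      by simp
    finally show ?thesis .
  qed
  then have "inverse (real q ^ m) ^ e \<le> (2 * real q powr (1 - real m)) ^ e"
    by (rule power_mono) simp
  finally show ?thesis .
qed

lemma gabidulin_power_ratio_le:
  assumes "1 \<le> q" and "1 \<le> m" and "1 \<le> k" and "k < n"
  shows "(real q ^ m) ^ (n - 1) / (real q ^ m) ^ (k * (n - k))
           \<le> (2 * real q powr (1 - real m)) ^ ((k div 2) * ((n - k) div 2))"
proof -
  define A where "A = (k - 1) * (n - k - 1)"
  obtain a b where "k = Suc a" and "n - k = Suc b"
    by (rule that[of "k - 1" "n - k - 1"]) (use assms(3,4) in linarith)+
  then have "k * (n - k) = (n - 1) + A"
    by (simp add: A_def algebra_simps)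
  then have "(real q ^ m) ^ (n - 1) / (real q ^ m) ^ (k * (n - k)) = 1 / (real q ^ m) ^ A"
    using assms(1) by (simp add: power_add)
  also have "\<dots> = inverse (real q ^ m) ^ A"
    by (simp add: power_one_over inverse_eq_divide)
  also have "\<dots> \<le> (2 * real q powr (1 - real m)) ^ ((k div 2) * ((n - k) div 2))"
    by (rule inverse_power_le_gabidulin_bound) (use assms(1,2) in \<open>simp_all add: A_def mult_le_mono\<close>)
  finally show ?thesis .
qed

lemma prime_power_gt_0: "prime_power q \<Longrightarrow> 0 < q"
  by (auto simp: prime_power_def prime_gt_0_nat)

theorem theorem4p9:
  fixes q m k n :: nat
    and Mats :: "(nat \<Rightarrow> nat \<Rightarrow> 'a::{field,finite}) set"
  assumes "prime_power q" and "m \<ge> 2" and "1 \<le> k" and "k < n"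
    and "card (UNIV :: 'a set) = q ^ m"
    and "Mats = matrices k (n - k)"
  shows "real (card {X \<in> Mats. generalized_gabidulin q m k n (row_space k n (sys_matrix k X))})
           / real (card Mats)
         \<le> real (totient m) * (2 * real q powr (1 - real m)) ^ ((k div 2) * ((n - k) div 2))"
proof -
  let ?Good = "{X \<in> Mats. generalized_gabidulin q m k n (row_space k n (sys_matrix k X))}"
  have "card ?Good \<le> totient m * card (UNIV :: 'a set) ^ (n - 1)"
    unfolding assms(6) by (rule card_systematic_generalized_gabidulin_le) (use assms(4,5) in auto)
  then have "real (card ?Good) \<le> real (totient m * (q ^ m) ^ (n - 1))"
    unfolding assms(5) by (rule of_nat_mono)
  then have good: "real (card ?Good) \<le> real (totient m) * (real q ^ m) ^ (n - 1)"
    by simp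
  have mats: "real (card Mats) = (real q ^ m) ^ (k * (n - k))"
    using assms(5,6) by (simp add: card_matrices)
  have "real (card ?Good) / real (card Mats)
          \<le> real (totient m) * ((real q ^ m) ^ (n - 1) / (real q ^ m) ^ (k * (n - k)))"
    unfolding mats times_divide_eq_right by (rule divide_right_mono[OF good]) simp
  also have "\<dots> \<le> real (totient m) * (2 * real q powr (1 - real m)) ^ ((k div 2) * ((n - k) div 2))"
    using prime_power_gt_0[OF assms(1)] assms(2-4)
    by (intro mult_left_mono gabidulin_power_ratio_le) auto
  finally show ?thesis .
qed

end
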